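(* Let $\mathcal{D}$ be a distribution on $\mathbb{R}^d\times\{\pm1\}$ generated by the Massart noise model with noise bound $\eta<1/2$ and target $f(\mathbf{x})=\mathrm{sign}(\langle\mathbf{w}^*,\mathbf{x}\rangle)$, $\mathbf{w}^*\in\mathbb{S}^{d-1}$, whose marginal $\mathcal{D}_{\mathbf{x}}$ is $(U,R)$-bounded. Fix $\theta\in(0,\pi/2)$ and let $\widehat{\mathbf{w}}\in\mathbb{S}^{d-1}$ satisfy $\theta(\widehat{\mathbf{w}},\mathbf{w}^* )\in(\theta,\pi-\theta)$. If $0<\sigma\le\frac{R}{2U}\sqrt{1-2\eta}\,\sin\theta$, then $\mathcal{L}^{\mathrm{ramp}}_\sigma$ is differentiable at $\widehat{\mathbf{w}}$ and $$\|\nabla_{\mathbf{w}}\mathcal{L}^{\mathrm{ramp}}_\sigma(\widehat{\mathbf{w}})\|_2\ge\frac{R^2(1-2\eta)}{8U}.$$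
   Context: $\mathrm{sign}(t)=1$ if $t\ge0$, $-1$ otherwise; $\theta(\cdot,\cdot)\in[0,\pi]$ is the angle between vectors. Massart noise model: there is an unknown measurable $\eta(\cdot):\mathbb{R}^d\to[0,\eta]$; $(\mathbf{x},y)\sim\mathcal{D}$ is produced by drawing $\mathbf{x}\sim\mathcal{D}_{\mathbf{x}}$ and setting $y=f(\mathbf{x})$ with probability $1-\eta(\mathbf{x})$ and $y=-f(\mathbf{x})$ with probability $\eta(\mathbf{x})$. Ramp function: $r_\sigma(t)=0$ for $t<-\sigma/2$, $r_\sigma(t)=t/\sigma+1/2$ for $|t|\le\sigma/2$, $r_\sigma(t)=1$ for $t>\sigma/2$. Ramp surrogate: for $\mathbf{w}\ne0$, $\mathcal{L}^{\mathrm{ramp}}_\sigma(\mathbf{w})=\mathbb{E}_{(\mathbf{x},y)\sim\mathcal{D}}\big[r_\sigma\big(-y\langle\mathbf{w},\mathbf{x}\rangle/\|\mathbf{w}\|_2\big)\big]$. $(U,R)$-bounded: $\mathcal{D}_{\mathbf{x}}$ is isotropic (zero mean, identity covariance) and for every 2-dimensional subspace $V$ the projection of $\mathcal{D}_{\mathbf{x}}$ onto $V$ has a density $\gamma_V$ with $\gamma_V(\mathbf{x})\ge1/U$ whenever $\|\mathbf{x}\|_2\le R$, and $\gamma_V(\mathbf{x})\le U$ for all $\mathbf{x}\in V$. *)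

theory Defs
  imports "HOL-Analysis.Analysis" "HOL-Probability.Probability"
begin

definition sgn1 :: "real \<Rightarrow> real" where
  "sgn1 t = (if t \<ge> 0 then 1 else -1)"

definition vec_angle :: "'a::real_inner \<Rightarrow> 'a \<Rightarrow> real" where
  "vec_angle u v = arccos ((u \<bullet> v) / (norm u * norm v))"

definition ramp :: "real \<Rightarrow> real \<Rightarrow> real" where
  "ramp \<sigma> t = (if t < - \<sigma> / 2 then 0 else if t \<le> \<sigma> / 2 then t / \<sigma> + 1 / 2 else 1)"

definition isotropic :: "(real^'d) measure \<Rightarrow> bool" where
  "isotropic Dx \<longleftrightarrow>
     (\<forall>i. integrable Dx (\<lambda>x. x $ i) \<and> (\<integral>x. x $ i \<partial>Dx) = 0) \<and>
     (\<forall>i j. integrable Dx (\<lambda>x. x $ i * x $ j) \<and>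
            (\<integral>x. x $ i * x $ j \<partial>Dx) = (if i = j then 1 else 0))"

text \<open>A 2-dimensional subspace V is given by an orthonormal
  basis (u1,u2); the projection onto V is identified with x |-> (u1.x, u2.x) in R^2
  (an isometry V -> R^2), and its density is taken w.r.t. Lebesgue measure on R^2.\<close>
definition UR_bounded :: "real \<Rightarrow> real \<Rightarrow> (real^'d) measure \<Rightarrow> bool" where
  "UR_bounded U R Dx \<longleftrightarrow>
     U > 0 \<and> R > 0 \<and> prob_space Dx \<and> sets Dx = sets borel \<and> isotropic Dx \<and>
     (\<forall>u1 u2. norm u1 = 1 \<and> norm u2 = 1 \<and> u1 \<bullet> u2 = 0 \<longrightarrow>
        (\<exists>g :: real \<times> real \<Rightarrow> ennreal.
           distributed Dx lborel (\<lambda>x. (u1 \<bullet> x, u2 \<bullet> x)) g \<and>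
           (\<forall>z. norm z \<le> R \<longrightarrow> ennreal (1 / U) \<le> g z) \<and>
           (\<forall>z. g z \<le> ennreal U)))"

definition massart_noise :: "real \<Rightarrow> (real^'d \<Rightarrow> real) \<Rightarrow> bool" where
  "massart_noise \<eta> \<eta>f \<longleftrightarrow> \<eta>f \<in> borel_measurable borel \<and> (\<forall>x. 0 \<le> \<eta>f x \<and> \<eta>f x \<le> \<eta>)"

text \<open>Ramp surrogate loss E_{(x,y)~D}[r_sigma(-y <w,x>/||w||)] for the Massart distribution D
  with marginal Dx, target f and noise function eta_f: given x, y = f x with probability
  1 - eta_f x and y = - f x with probability eta_f x.\<close>
definition ramp_loss ::
  "(real^'d) measure \<Rightarrow> (real^'d \<Rightarrow> real) \<Rightarrow> (real^'d \<Rightarrow> real) \<Rightarrow> real \<Rightarrow> real^'d \<Rightarrow> real" where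
  "ramp_loss Dx f \<eta>f \<sigma> w =
     (\<integral>x. (1 - \<eta>f x) * ramp \<sigma> (- f x * (w \<bullet> x) / norm w)
          + \<eta>f x * ramp \<sigma> (f x * (w \<bullet> x) / norm w) \<partial>Dx)"

end

theory Submission
  imports Defs
begin

text \<open>
  Write \<open>w\<^sup>* = c \<cdot> \<^bold>w + s \<cdot> e\<close> with \<open>e \<bottom> \<^bold>w\<close> a unit vector and \<open>s = sin \<angle>(\<^bold>w, w\<^sup>*) > sin \<theta>\<close>.
  Since \<open>ramp \<sigma> t = clamp \<sigma> t / \<sigma> + 1/2\<close>, the Massart ramp loss is
  \<open>1/2 - E[\<beta>(x) clamp \<sigma> \<langle>w/\<parallel>w\<parallel>, x\<rangle>] / \<sigma>\<close> with \<open>\<beta>(x) = sign \<langle>w\<^sup>*, x\<rangle> (1 - 2\<eta>(x))\<close>.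
  The projected density on \<open>span(\<^bold>w, e)\<close> makes the edge \<open>|\<langle>\<^bold>w, x\<rangle>| = \<sigma>/2\<close> of the slab a null
  set, so dominated convergence gives differentiability at \<open>\<^bold>w\<close> with gradient
  \<open>-(1/\<sigma>) E[\<beta>(x) 1{|\<langle>\<^bold>w, x\<rangle>| < \<sigma>/2} (x - \<langle>\<^bold>w, x\<rangle> \<^bold>w)]\<close>.
  Its component along \<open>-e\<close> is bounded below inside the slab: off the strip \<open>|\<langle>e, x\<rangle>| \<le> \<kappa> = |c| \<sigma> / (2s)\<close>
  the sign of \<open>\<langle>w\<^sup>*, x\<rangle>\<close> is that of \<open>\<langle>e, x\<rangle>\<close>, so the integrand is at least \<open>(1 - 2\<eta>) |\<langle>e, x\<rangle>|\<close>;
  the region \<open>R/2 \<le> |\<langle>e, x\<rangle>| \<le> 3R/4\<close>, where the density is at least \<open>1/U\<close>, gains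
  \<open>(1 - 2\<eta>) R\<^sup>2 \<sigma> / (4U)\<close>, while the strip, where the density is at most \<open>U\<close>, loses at most
  \<open>2 U \<sigma> \<kappa>\<^sup>2\<close>. The bound on \<open>\<sigma>\<close> makes the loss at most half the gain.
\<close>

definition clamp :: "real \<Rightarrow> real \<Rightarrow> real" where
  "clamp \<sigma> t = max (- \<sigma> / 2) (min (\<sigma> / 2) t)"

lemma ramp_eq_clamp: "\<sigma> > 0 \<Longrightarrow> ramp \<sigma> t = clamp \<sigma> t / \<sigma> + 1 / 2"
  unfolding ramp_def clamp_def by (auto simp: field_simps max_def min_def)

lemma clamp_uminus: "\<sigma> \<ge> 0 \<Longrightarrow> clamp \<sigma> (- t) = - clamp \<sigma> t"
  unfolding clamp_def by (auto simp: max_def min_def)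

lemma abs_clamp_le: "\<bar>clamp \<sigma> t\<bar> \<le> \<bar>\<sigma>\<bar> / 2"
  unfolding clamp_def by auto

lemma continuous_on_clamp: "continuous_on A (clamp \<sigma>)"
  unfolding clamp_def by (intro continuous_intros)

lemma ramp_noisy_label_expectation:
  assumes "\<sigma> > 0" "f = 1 \<or> f = -1"
  shows "(1 - p) * ramp \<sigma> (- f * t) + p * ramp \<sigma> (f * t) = 1 / 2 - f * (1 - 2 * p) * clamp \<sigma> t / \<sigma>"
  using assms by (auto simp: ramp_eq_clamp clamp_uminus field_simps)

lemma clamp_first_order_error:
  assumes "\<sigma> > 0" "\<bar>d\<bar> \<le> r"
  shows "\<bar>clamp \<sigma> (t + d) - clamp \<sigma> t - (if \<bar>t\<bar> < \<sigma> / 2 then d else 0)\<bar>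
           \<le> 2 * r * (if \<bar>\<bar>t\<bar> - \<sigma> / 2\<bar> \<le> r then 1 else 0)"
  using assms unfolding clamp_def by (auto simp: max_def min_def abs_if split: if_splits)

lemma has_derivative_sgn_unit:
  fixes w0 :: "'a::real_inner"
  assumes "norm w0 = 1"
  shows "(sgn has_derivative (\<lambda>h. h - (w0 \<bullet> h) *\<^sub>R w0)) (at w0)"
proof -
  have "w0 \<noteq> 0" using assms by auto
  have "((\<lambda>w. inverse (norm w) *\<^sub>R w) has_derivative (\<lambda>h. h - (w0 \<bullet> h) *\<^sub>R w0)) (at w0)"
    apply (rule has_derivative_eq_rhs)
     apply (rule derivative_eq_intros has_derivative_norm[OF \<open>w0 \<noteq> 0\<close>] | simp add: \<open>w0 \<noteq> 0\<close>)+
    using assms by (auto simp: fun_eq_iff algebra_simps inner_commute sgn_div_norm)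
  moreover have "sgn = (\<lambda>w::'a. inverse (norm w) *\<^sub>R w)"
    by (rule ext) (rule sgn_div_norm)
  ultimately show ?thesis by simp
qed

lemma norm_sgn_diff_le:
  fixes y w0 :: "'a::real_normed_vector"
  assumes "norm w0 = 1"
  shows "norm (sgn y - w0) \<le> 2 * norm (y - w0)"
proof (cases "y = 0")
  case True
  then show ?thesis using assms by simp
next
  case False
  have "sgn y - y = (inverse (norm y) - 1) *\<^sub>R y" by (simp add: sgn_div_norm algebra_simps)
  then have "norm (sgn y - y) = \<bar>(inverse (norm y) - 1) * norm y\<bar>" by (simp add: abs_mult)
  also have "\<dots> = \<bar>1 - norm y\<bar>" using False by (simp add: algebra_simps)
  also have "\<dots> \<le> norm (y - w0)"
    using assms norm_triangle_ineq3[of y w0] by (simp add: abs_minus_commute)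
  finally have "norm (sgn y - y) \<le> norm (y - w0)" .
  moreover have "norm (sgn y - w0) \<le> norm (sgn y - y) + norm (y - w0)"
    using norm_triangle_ineq[of "sgn y - y" "y - w0"] by simp
  ultimately show ?thesis by linarith
qed

definition ramp_slab :: "'a::real_inner \<Rightarrow> real \<Rightarrow> 'a set" where
  "ramp_slab w \<sigma> = {x. \<bar>w \<bullet> x\<bar> < \<sigma> / 2}"

text \<open>Points whose membership in \<open>ramp_slab w \<sigma>\<close> can change when \<open>w\<close> moves by \<open>\<delta>\<close>.\<close>

definition slab_edge_band :: "'a::real_inner \<Rightarrow> real \<Rightarrow> real \<Rightarrow> 'a set" where
  "slab_edge_band w \<sigma> \<delta> = {x. \<bar>\<bar>w \<bullet> x\<bar> - \<sigma> / 2\<bar> \<le> \<delta> * norm x}"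

text \<open>The gradient at a unit vector \<open>w\<close> of \<open>v \<mapsto> E[\<beta>(x) clamp \<sigma> \<langle>sgn v, x\<rangle>]\<close>: only the slab,
  where the clamp is linear, contributes, and the derivative of \<open>sgn\<close> projects out the radial part.\<close>

definition clamp_grad :: "'a::euclidean_space measure \<Rightarrow> ('a \<Rightarrow> real) \<Rightarrow> real \<Rightarrow> 'a \<Rightarrow> 'a" where
  "clamp_grad M \<beta> \<sigma> w = (\<integral>x. (\<beta> x * indicator (ramp_slab w \<sigma>) x) *\<^sub>R (x - (w \<bullet> x) *\<^sub>R w) \<partial>M)"

lemma integrable_norm_dominated:
  fixes f :: "'a::real_normed_vector \<Rightarrow> 'b::{banach,second_countable_topology}"
  assumes "integrable M norm" "f \<in> borel_measurable M" "\<And>x. norm (f x) \<le> C * norm x"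
  shows "integrable M f"
proof (rule Bochner_Integration.integrable_bound[of M "\<lambda>x. C * norm x"])
  show "AE x in M. norm (f x) \<le> norm (C * norm x)"
  proof (rule AE_I2)
    show "norm (f x) \<le> norm (C * norm x)" for x
      using assms(3)[of x] abs_ge_self[of "C * norm x"] unfolding real_norm_def by linarith
  qed
qed (use assms in simp_all)

lemma integrable_norm_isotropic:
  fixes Dx :: "(real^'d) measure"
  assumes "isotropic Dx" "sets Dx = sets borel" "prob_space Dx"
  shows "integrable Dx norm"
proof (rule Bochner_Integration.integrable_bound[of Dx "\<lambda>x. \<Sum>i\<in>UNIV. 1 + x $ i * x $ i"])
  have "integrable Dx (\<lambda>x. x $ i * x $ i)" for i using assms(1) by (simp add: isotropic_def)
  moreover have "integrable Dx (\<lambda>x. 1::real)"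
    using assms(3) by (simp add: prob_space.finite_measure finite_measure.integrable_const)
  ultimately show "integrable Dx (\<lambda>x. \<Sum>i\<in>UNIV. 1 + x $ i * x $ i)" by auto
  show "norm \<in> borel_measurable Dx" using assms(2) by (simp cong: measurable_cong_sets)
  have l1: "norm x \<le> (\<Sum>i\<in>UNIV. 1 + x $ i * x $ i)" for x :: "real^'d"
  proof -
    have "\<bar>x $ i\<bar> \<le> 1 + x $ i * x $ i" for i
      using zero_le_square[of "\<bar>x $ i\<bar> - 1"] by (simp add: algebra_simps abs_mult_self_eq)
    then have "(\<Sum>i\<in>UNIV. \<bar>x $ i\<bar>) \<le> (\<Sum>i\<in>UNIV. 1 + x $ i * x $ i)"
      by (rule sum_mono)
    then show ?thesis using norm_le_l1_cart[of x] by linarith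
  qed
  show "AE x in Dx. norm (norm x) \<le> norm (\<Sum>i\<in>UNIV. 1 + x $ i * x $ i)"
  proof (rule AE_I2)
    fix x :: "real^'d"
    show "norm (norm x) \<le> norm (\<Sum>i\<in>UNIV. 1 + x $ i * x $ i)"
      using l1[of x] abs_ge_self[of "\<Sum>i\<in>UNIV. 1 + x $ i * x $ i"] by simp
  qed
qed

lemma has_bochner_integral_inner_clamp_grad:
  fixes M :: "'a::euclidean_space measure"
  assumes "sets M = sets borel" "integrable M norm" "\<beta> \<in> borel_measurable borel"
    "\<And>x. \<bar>\<beta> x\<bar> \<le> 1" "norm w = 1"
  shows "has_bochner_integral M (\<lambda>x. \<beta> x * indicator (ramp_slab w \<sigma>) x * ((h - (w \<bullet> h) *\<^sub>R w) \<bullet> x))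
           (clamp_grad M \<beta> \<sigma> w \<bullet> h)"
proof -
  define G where "G = (\<lambda>x. (\<beta> x * indicator (ramp_slab w \<sigma>) x) *\<^sub>R (x - (w \<bullet> x) *\<^sub>R w))"
  have "G \<in> borel_measurable M"
    using assms(1,3) unfolding G_def ramp_slab_def by (simp cong: measurable_cong_sets) measurable
  moreover have "norm (G x) \<le> 2 * norm x" for x
  proof -
    have a: "\<bar>\<beta> x * indicator (ramp_slab w \<sigma>) x\<bar> \<le> 1"
      using assms(4)[of x] by (auto simp: indicator_def)
    have b: "norm (x - (w \<bullet> x) *\<^sub>R w) \<le> 2 * norm x"
      using norm_triangle_ineq4[of x "(w \<bullet> x) *\<^sub>R w"] Cauchy_Schwarz_ineq2[of w x] assms(5) by simp
    show ?thesis unfolding G_def using mult_mono[OF a b] by simp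
  qed
  ultimately have G: "integrable M G" by (intro integrable_norm_dominated[OF assms(2)])
  have eq: "(\<lambda>x. \<beta> x * indicator (ramp_slab w \<sigma>) x * ((h - (w \<bullet> h) *\<^sub>R w) \<bullet> x)) = (\<lambda>x. G x \<bullet> h)"
    by (rule ext) (simp add: G_def algebra_simps inner_commute)
  have val: "clamp_grad M \<beta> \<sigma> w \<bullet> h = (\<integral>x. G x \<bullet> h \<partial>M)"
    unfolding clamp_grad_def G_def[symmetric] by (rule integral_inner_left[OF G, symmetric])
  show ?thesis
    unfolding eq val by (rule has_bochner_integral_integrable[OF integrable_inner_left[OF G]])
qed

lemma integral_slab_edge_band_small:
  fixes M :: "'a::euclidean_space measure"
  assumes sets: "sets M = sets borel" and int: "integrable M norm"
    and edge_null: "AE x in M. \<bar>w \<bullet> x\<bar> \<noteq> \<sigma> / 2" and "\<epsilon> > 0"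
  obtains \<delta> where "\<delta> > 0"
    "\<And>\<delta>'. \<delta>' \<le> \<delta> \<Longrightarrow> (\<integral>x. norm x * indicator (slab_edge_band w \<sigma> \<delta>') x \<partial>M) < \<epsilon>"
proof -
  define f where "f \<delta> x = norm x * indicator (slab_edge_band w \<sigma> \<delta>) x" for \<delta> and x :: 'a
  have f_meas: "f \<delta> \<in> borel_measurable M" for \<delta>
    using sets unfolding f_def slab_edge_band_def by (simp cong: measurable_cong_sets) measurable
  have f_int: "integrable M (f \<delta>)" for \<delta>
    by (rule integrable_norm_dominated[OF int f_meas, where C = 1]) (simp add: f_def indicator_def)
  have "(\<lambda>n. \<integral>x. f (inverse (Suc n)) x \<partial>M) \<longlonglongrightarrow> (\<integral>x. 0 \<partial>M)"
  proof (rule integral_dominated_convergence[where w = norm])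
    show "AE x in M. (\<lambda>n. f (inverse (Suc n)) x) \<longlonglongrightarrow> 0"
      using edge_null
    proof eventually_elim
      case (elim x)
      have "\<bar>\<bar>w \<bullet> x\<bar> - \<sigma> / 2\<bar> > 0" using elim by simp
      moreover have "(\<lambda>n. inverse (Suc n) * norm x) \<longlonglongrightarrow> 0"
        by (rule tendsto_mult_left_zero[OF LIMSEQ_inverse_real_of_nat])
      ultimately have "eventually (\<lambda>n. inverse (Suc n) * norm x < \<bar>\<bar>w \<bullet> x\<bar> - \<sigma> / 2\<bar>) sequentially"
        by (simp add: order_tendstoD(2))
      then have "eventually (\<lambda>n. f (inverse (Suc n)) x = 0) sequentially"
        by eventually_elim (auto simp: f_def slab_edge_band_def)
      then show ?case by (rule tendsto_eventually)
    qed
    show "AE x in M. norm (f (inverse (Suc n)) x) \<le> norm x" for n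
      by (simp add: f_def indicator_def)
  qed (use int f_meas in simp_all)
  from order_tendstoD(2)[OF this] \<open>\<epsilon> > 0\<close>
  obtain N where N: "(\<integral>x. f (inverse (Suc N)) x \<partial>M) < \<epsilon>"
    unfolding eventually_sequentially by auto
  show thesis
  proof (rule that)
    show "inverse (Suc N) > (0::real)" by simp
    fix \<delta>' :: real assume "\<delta>' \<le> inverse (Suc N)"
    then have "f \<delta>' x \<le> f (inverse (Suc N)) x" for x
      using mult_right_mono[of \<delta>' "inverse (Suc N)" "norm x"]
      by (auto simp: f_def slab_edge_band_def indicator_def)
    then have "(\<integral>x. f \<delta>' x \<partial>M) \<le> (\<integral>x. f (inverse (Suc N)) x \<partial>M)"
      by (intro integral_mono f_int)
    with N show "(\<integral>x. norm x * indicator (slab_edge_band w \<sigma> \<delta>') x \<partial>M) < \<epsilon>"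
      by (simp add: f_def)
  qed
qed

lemma clamp_sgn_linearization_error:
  fixes w y x D :: "'a::real_inner"
  assumes "\<sigma> > 0" "norm w = 1" "norm (sgn y - w - D) \<le> r"
  shows "\<bar>clamp \<sigma> (sgn y \<bullet> x) - clamp \<sigma> (w \<bullet> x) - indicator (ramp_slab w \<sigma>) x * (D \<bullet> x)\<bar>
           \<le> 4 * norm (y - w) * (norm x * indicator (slab_edge_band w \<sigma> (2 * norm (y - w))) x)
             + r * norm x"
proof -
  define t where "t = w \<bullet> x"
  define d where "d = (sgn y - w) \<bullet> x"
  have "\<bar>d\<bar> \<le> 2 * norm (y - w) * norm x"
    using Cauchy_Schwarz_ineq2[of "sgn y - w" x] norm_sgn_diff_le[OF assms(2), of y]
    by (simp add: d_def) (meson mult_right_mono norm_ge_zero order_trans)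
  then have "\<bar>clamp \<sigma> (t + d) - clamp \<sigma> t - (if \<bar>t\<bar> < \<sigma> / 2 then d else 0)\<bar>
      \<le> 2 * (2 * norm (y - w) * norm x) * (if \<bar>\<bar>t\<bar> - \<sigma> / 2\<bar> \<le> 2 * norm (y - w) * norm x then 1 else 0)"
    by (rule clamp_first_order_error[OF assms(1)])
  also have "\<dots> = 4 * norm (y - w) * (norm x * indicator (slab_edge_band w \<sigma> (2 * norm (y - w))) x)"
    by (simp add: t_def slab_edge_band_def indicator_def)
  finally have clamp_err: "\<bar>clamp \<sigma> (t + d) - clamp \<sigma> t - (if \<bar>t\<bar> < \<sigma> / 2 then d else 0)\<bar>
      \<le> 4 * norm (y - w) * (norm x * indicator (slab_edge_band w \<sigma> (2 * norm (y - w))) x)" .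
  have "\<bar>d - D \<bullet> x\<bar> \<le> r * norm x"
    using Cauchy_Schwarz_ineq2[of "sgn y - w - D" x] assms(3)
    by (simp add: d_def inner_diff_left) (meson mult_right_mono norm_ge_zero order_trans)
  moreover have "0 \<le> r" using norm_ge_zero assms(3) by (rule order_trans)
  ultimately have "\<bar>indicator (ramp_slab w \<sigma>) x * (d - D \<bullet> x)\<bar> \<le> r * norm x"
    by (simp add: indicator_def)
  moreover have "sgn y \<bullet> x = t + d" by (simp add: t_def d_def inner_diff_left)
  moreover have "(if \<bar>t\<bar> < \<sigma> / 2 then d else 0) = indicator (ramp_slab w \<sigma>) x * d"
    by (simp add: t_def ramp_slab_def indicator_def)
  ultimately show ?thesis
    using clamp_err unfolding t_def by (simp add: right_diff_distrib abs_le_iff)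
qed

lemma integrable_clamp_inner:
  fixes M :: "'a::euclidean_space measure"
  assumes "finite_measure M" "sets M = sets borel" "\<beta> \<in> borel_measurable borel" "\<And>x. \<bar>\<beta> x\<bar> \<le> 1"
  shows "integrable M (\<lambda>x. \<beta> x * clamp \<sigma> (c \<bullet> x))"
proof (rule finite_measure.integrable_const_bound[OF assms(1), where B = "\<bar>\<sigma>\<bar> / 2"])
  show "AE x in M. norm (\<beta> x * clamp \<sigma> (c \<bullet> x)) \<le> \<bar>\<sigma>\<bar> / 2"
    using mult_mono[OF assms(4) abs_clamp_le] by (simp add: abs_mult)
  have "(\<lambda>x. clamp \<sigma> (c \<bullet> x)) \<in> borel_measurable borel"
    by (intro borel_measurable_continuous_onI continuous_on_compose2[OF continuous_on_clamp]
        continuous_intros) auto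
  then show "(\<lambda>x. \<beta> x * clamp \<sigma> (c \<bullet> x)) \<in> borel_measurable M"
    using assms(2,3) by (simp cong: measurable_cong_sets)
qed

lemma clamp_integral_remainder_le:
  fixes M :: "'a::euclidean_space measure"
  assumes fin: "finite_measure M" and sets: "sets M = sets borel" and int: "integrable M norm"
    and \<beta>: "\<beta> \<in> borel_measurable borel" "\<And>x. \<bar>\<beta> x\<bar> \<le> 1"
    and w: "norm w = 1" and "\<sigma> > 0"
    and approx: "norm (sgn y - w - ((y - w) - (w \<bullet> (y - w)) *\<^sub>R w)) \<le> r"
  shows "\<bar>(\<integral>x. \<beta> x * clamp \<sigma> (sgn y \<bullet> x) \<partial>M) - (\<integral>x. \<beta> x * clamp \<sigma> (w \<bullet> x) \<partial>M)
            - clamp_grad M \<beta> \<sigma> w \<bullet> (y - w)\<bar>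
         \<le> 4 * norm (y - w) * (\<integral>x. norm x * indicator (slab_edge_band w \<sigma> (2 * norm (y - w))) x \<partial>M)
            + r * (\<integral>x. norm x \<partial>M)"
proof -
  define D where "D = (y - w) - (w \<bullet> (y - w)) *\<^sub>R w"
  define band where "band x = norm x * indicator (slab_edge_band w \<sigma> (2 * norm (y - w))) x" for x
  define E where "E x = \<beta> x * clamp \<sigma> (sgn y \<bullet> x) - \<beta> x * clamp \<sigma> (w \<bullet> x)
      - \<beta> x * indicator (ramp_slab w \<sigma>) x * (D \<bullet> x)" for x
  note grad = has_bochner_integral_inner_clamp_grad[OF sets int \<beta> w, of \<sigma> "y - w"]
  have band_int: "integrable M band"
    unfolding band_def slab_edge_band_def using sets
    by (intro integrable_norm_dominated[OF int, where C = 1]) (auto simp: indicator_def cong: measurable_cong_sets)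
  have E_int: "integrable M E"
    unfolding E_def D_def
    using integrable_clamp_inner[OF fin sets \<beta>] integrable.intros[OF grad] by auto
  have "(\<integral>x. \<beta> x * clamp \<sigma> (sgn y \<bullet> x) \<partial>M) - (\<integral>x. \<beta> x * clamp \<sigma> (w \<bullet> x) \<partial>M)
            - clamp_grad M \<beta> \<sigma> w \<bullet> (y - w) = (\<integral>x. E x \<partial>M)"
    unfolding E_def D_def has_bochner_integral_integral_eq[OF grad, symmetric]
    using integrable_clamp_inner[OF fin sets \<beta>] integrable.intros[OF grad] by simp
  also have "\<bar>\<dots>\<bar> \<le> (\<integral>x. \<bar>E x\<bar> \<partial>M)"
    by (rule integral_abs_bound)
  also have "\<dots> \<le> (\<integral>x. 4 * norm (y - w) * band x + r * norm x \<partial>M)"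
  proof (rule integral_mono)
    show "\<bar>E x\<bar> \<le> 4 * norm (y - w) * band x + r * norm x" for x
    proof -
      have "\<bar>E x\<bar> = \<bar>\<beta> x\<bar> * \<bar>clamp \<sigma> (sgn y \<bullet> x) - clamp \<sigma> (w \<bullet> x) - indicator (ramp_slab w \<sigma>) x * (D \<bullet> x)\<bar>"
        by (simp add: E_def abs_mult[symmetric] algebra_simps)
      also have "\<dots> \<le> \<bar>clamp \<sigma> (sgn y \<bullet> x) - clamp \<sigma> (w \<bullet> x) - indicator (ramp_slab w \<sigma>) x * (D \<bullet> x)\<bar>"
        using \<beta>(2)[of x] by (simp add: mult_left_le_one_le)
      also have "\<dots> \<le> 4 * norm (y - w) * band x + r * norm x"
        unfolding band_def by (rule clamp_sgn_linearization_error[OF \<open>\<sigma> > 0\<close> w approx[folded D_def]])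
      finally show ?thesis .
    qed
  qed (use E_int band_int int in auto)
  also have "\<dots> = 4 * norm (y - w) * (\<integral>x. band x \<partial>M) + r * (\<integral>x. norm x \<partial>M)"
    using band_int int by simp
  finally show ?thesis by (simp add: band_def)
qed

lemma has_derivative_clamp_integral:
  fixes M :: "'a::euclidean_space measure"
  assumes fin: "finite_measure M" and sets: "sets M = sets borel" and int: "integrable M norm"
    and \<beta>: "\<beta> \<in> borel_measurable borel" "\<And>x. \<bar>\<beta> x\<bar> \<le> 1"
    and w: "norm w = 1" and "\<sigma> > 0"
    and edge_null: "AE x in M. \<bar>w \<bullet> x\<bar> \<noteq> \<sigma> / 2"
  shows "((\<lambda>v. \<integral>x. \<beta> x * clamp \<sigma> (sgn v \<bullet> x) \<partial>M) has_derivative (\<lambda>h. clamp_grad M \<beta> \<sigma> w \<bullet> h)) (at w)"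
  unfolding has_derivative_at_alt
proof (intro conjI allI impI)
  show "bounded_linear ((\<bullet>) (clamp_grad M \<beta> \<sigma> w))" by (rule bounded_linear_inner_right)
  fix \<epsilon> :: real assume "\<epsilon> > 0"
  define K where "K = (\<integral>x. norm x \<partial>M)"
  have "K \<ge> 0" unfolding K_def by simp
  obtain \<delta> where "\<delta> > 0" and band_small:
    "\<And>\<delta>'. \<delta>' \<le> \<delta> \<Longrightarrow> (\<integral>x. norm x * indicator (slab_edge_band w \<sigma> \<delta>') x \<partial>M) < \<epsilon> / 8"
    using integral_slab_edge_band_small[OF sets int edge_null, of "\<epsilon> / 8"] \<open>\<epsilon> > 0\<close> by auto
  define e where "e = \<epsilon> / (2 * (K + 1))"
  have "e > 0" and "e * K \<le> \<epsilon> / 2"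
    using \<open>\<epsilon> > 0\<close> \<open>K \<ge> 0\<close> by (simp_all add: e_def field_simps)
  then obtain d where "d > 0" and sgn_approx: "\<And>y. norm (y - w) < d \<Longrightarrow>
      norm (sgn y - sgn w - ((y - w) - (w \<bullet> (y - w)) *\<^sub>R w)) \<le> e * norm (y - w)"
    using has_derivative_sgn_unit[OF w, unfolded has_derivative_at_alt] by blast
  show "\<exists>d>0. \<forall>y. norm (y - w) < d \<longrightarrow>
      norm ((\<integral>x. \<beta> x * clamp \<sigma> (sgn y \<bullet> x) \<partial>M) - (\<integral>x. \<beta> x * clamp \<sigma> (sgn w \<bullet> x) \<partial>M)
        - clamp_grad M \<beta> \<sigma> w \<bullet> (y - w)) \<le> \<epsilon> * norm (y - w)"
  proof (intro exI[of _ "min d (\<delta> / 2)"] conjI allI impI)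
    show "min d (\<delta> / 2) > 0" using \<open>d > 0\<close> \<open>\<delta> > 0\<close> by simp
    fix y assume y: "norm (y - w) < min d (\<delta> / 2)"
    have "sgn w = w" using w by (simp add: sgn_div_norm)
    have "norm ((\<integral>x. \<beta> x * clamp \<sigma> (sgn y \<bullet> x) \<partial>M) - (\<integral>x. \<beta> x * clamp \<sigma> (w \<bullet> x) \<partial>M)
        - clamp_grad M \<beta> \<sigma> w \<bullet> (y - w))
      \<le> 4 * norm (y - w) * (\<integral>x. norm x * indicator (slab_edge_band w \<sigma> (2 * norm (y - w))) x \<partial>M)
        + e * norm (y - w) * K"
      using clamp_integral_remainder_le[OF fin sets int \<beta> w \<open>\<sigma> > 0\<close> sgn_approx[of y, unfolded \<open>sgn w = w\<close>]] y
      unfolding K_def by simp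
    also have "\<dots> \<le> 4 * norm (y - w) * (\<epsilon> / 8) + norm (y - w) * (\<epsilon> / 2)"
    proof (rule add_mono)
      show "4 * norm (y - w) * (\<integral>x. norm x * indicator (slab_edge_band w \<sigma> (2 * norm (y - w))) x \<partial>M)
          \<le> 4 * norm (y - w) * (\<epsilon> / 8)"
        using band_small[of "2 * norm (y - w)"] y by (intro mult_left_mono) auto
      show "e * norm (y - w) * K \<le> norm (y - w) * (\<epsilon> / 2)"
        using mult_left_mono[OF \<open>e * K \<le> \<epsilon> / 2\<close> norm_ge_zero[of "y - w"]] by (simp add: ac_simps)
    qed
    also have "\<dots> \<le> \<epsilon> * norm (y - w)"
      using \<open>\<epsilon> > 0\<close> by (simp add: algebra_simps)
    finally show "norm ((\<integral>x. \<beta> x * clamp \<sigma> (sgn y \<bullet> x) \<partial>M) - (\<integral>x. \<beta> x * clamp \<sigma> (sgn w \<bullet> x) \<partial>M)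
        - clamp_grad M \<beta> \<sigma> w \<bullet> (y - w)) \<le> \<epsilon> * norm (y - w)"
      unfolding \<open>sgn w = w\<close> .
  qed
qed

lemma distributed_measure_le:
  assumes "finite_measure M" "distributed M N X g" "A \<in> sets N" "\<And>z. z \<in> A \<Longrightarrow> g z \<le> ennreal U"
    "emeasure N A = ennreal m" "0 \<le> U" "0 \<le> m"
  shows "measure M (X -` A \<inter> space M) \<le> U * m"
proof -
  have "emeasure M (X -` A \<inter> space M) = (\<integral>\<^sup>+z. g z * indicator A z \<partial>N)"
    using assms(2,3) by (rule distributed_emeasure)
  also have "\<dots> \<le> (\<integral>\<^sup>+z. ennreal U * indicator A z \<partial>N)"
    using assms(4) by (intro nn_integral_mono) (simp add: indicator_def)
  also have "\<dots> = ennreal (U * m)"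
    using assms(3,5,6,7) by (simp add: nn_integral_cmult_indicator ennreal_mult)
  finally show ?thesis
    using assms(6,7) by (simp add: finite_measure.emeasure_eq_measure[OF assms(1)])
qed

lemma distributed_measure_ge:
  assumes "finite_measure M" "distributed M N X g" "A \<in> sets N" "\<And>z. z \<in> A \<Longrightarrow> ennreal c \<le> g z"
    "emeasure N A = ennreal m" "0 \<le> c" "0 \<le> m"
  shows "c * m \<le> measure M (X -` A \<inter> space M)"
proof -
  have "ennreal (c * m) = (\<integral>\<^sup>+z. ennreal c * indicator A z \<partial>N)"
    using assms(3,5,6,7) by (simp add: nn_integral_cmult_indicator ennreal_mult)
  also have "\<dots> \<le> (\<integral>\<^sup>+z. g z * indicator A z \<partial>N)"
    using assms(4) by (intro nn_integral_mono) (simp add: indicator_def)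
  also have "\<dots> = emeasure M (X -` A \<inter> space M)"
    using assms(2,3) by (rule distributed_emeasure[symmetric])
  finally show ?thesis
    by (simp add: finite_measure.emeasure_eq_measure[OF assms(1)])
qed

lemma emeasure_lborel_Times:
  fixes A B :: "real set"
  assumes "A \<in> sets borel" "B \<in> sets borel"
  shows "emeasure (lborel :: (real \<times> real) measure) (A \<times> B) = emeasure lborel A * emeasure lborel B"
  using assms by (simp add: lborel_prod[symmetric] lborel.emeasure_pair_measure_Times)

lemma distributed_AE_fst_neq:
  fixes X Y :: "'a \<Rightarrow> real"
  assumes "distributed M lborel (\<lambda>x. (X x, Y x)) g"
  shows "AE x in M. X x \<noteq> a"
proof -
  define Z where "Z = {a} \<times> (UNIV :: real set)"
  have "emeasure lborel Z = 0"
    unfolding Z_def by (simp add: emeasure_lborel_Times)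
  moreover have "Z \<in> sets borel"
    unfolding Z_def by (intro borel_Times) auto
  ultimately have null: "Z \<in> null_sets lborel" by (intro null_setsI) auto
  have "emeasure M ((\<lambda>x. (X x, Y x)) -` Z \<inter> space M) = 0"
    using distributed_emeasure[OF assms] nn_integral_null_set[OF null] null by auto
  moreover have "(\<lambda>x. (X x, Y x)) -` Z \<inter> space M \<in> sets M"
    using measurable_sets[OF distributed_measurable[OF assms]] null by auto
  ultimately show ?thesis
    by (intro AE_I[where N = "(\<lambda>x. (X x, Y x)) -` Z \<inter> space M"]) (auto simp: Z_def)
qed

text \<open>Off the strip \<open>|b| \<le> \<kappa>\<close> the sign of \<open>c a + s b\<close> is that of \<open>b\<close>, since \<open>|c a| \<le> s \<kappa>\<close>
  inside the slab; on the strip the right-hand side is at least \<open>-\<kappa>\<close>.\<close>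

lemma sign_weighted_margin_lower_bound:
  fixes a b c s \<kappa> \<sigma> R q p :: real
  assumes "s > 0" "\<kappa> \<ge> 0" "\<bar>c\<bar> * \<sigma> / 2 \<le> s * \<kappa>" "\<kappa> < R / 2" "0 \<le> p" "p \<le> q" "q \<le> 1"
  shows "p * (R / 2) * indicator ({- \<sigma> / 2<..<\<sigma> / 2} \<times> ({- (3 * R / 4)..- (R / 2)} \<union> {R / 2..3 * R / 4})) (a, b)
           - \<kappa> * indicator ({- \<sigma> / 2<..<\<sigma> / 2} \<times> {- \<kappa>..\<kappa>}) (a, b)
         \<le> sgn1 (c * a + s * b) * q * indicator {- \<sigma> / 2<..<\<sigma> / 2} a * b"
proof (cases "\<bar>a\<bar> < \<sigma> / 2")
  case False
  then show ?thesis by (auto simp: indicator_def)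
next
  case True
  then have slab: "a \<in> {- \<sigma> / 2<..<\<sigma> / 2}" by auto
  have "\<bar>c * a\<bar> \<le> \<bar>c\<bar> * \<sigma> / 2"
    using True mult_left_mono[of "\<bar>a\<bar>" "\<sigma> / 2" "\<bar>c\<bar>"] by (simp add: abs_mult)
  then have ca: "\<bar>c * a\<bar> \<le> s * \<kappa>" using assms(3) by linarith
  consider "b > \<kappa>" | "b < - \<kappa>" | "\<bar>b\<bar> \<le> \<kappa>" by linarith
  then show ?thesis
  proof cases
    case 1
    then have "s * \<kappa> < s * b" using assms(1) by simp
    then have "sgn1 (c * a + s * b) = 1" using ca by (simp add: sgn1_def)
    moreover have "b \<in> {- (3 * R / 4)..- (R / 2)} \<union> {R / 2..3 * R / 4} \<Longrightarrow> p * (R / 2) \<le> q * b"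
      using 1 assms by (intro mult_mono) auto
    ultimately show ?thesis
      using 1 slab assms by (auto simp: indicator_def intro!: mult_nonneg_nonneg)
  next
    case 2
    then have "s * b < s * (- \<kappa>)" using assms(1) by (intro mult_strict_left_mono)
    then have "sgn1 (c * a + s * b) = -1" using ca by (simp add: sgn1_def)
    moreover have "b \<in> {- (3 * R / 4)..- (R / 2)} \<union> {R / 2..3 * R / 4} \<Longrightarrow> p * (R / 2) \<le> q * (- b)"
      using 2 assms by (intro mult_mono) auto
    moreover have "b * q \<le> 0" using 2 assms by (intro mult_nonpos_nonneg) auto
    ultimately show ?thesis
      using 2 slab assms by (auto simp: indicator_def)
  next
    case 3
    have "\<bar>sgn1 (c * a + s * b) * q * b\<bar> \<le> \<kappa>"
      using 3 assms mult_mono[of q 1 "\<bar>b\<bar>" \<kappa>] by (simp add: abs_mult sgn1_def)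
    then show ?thesis
      using 3 slab assms by (auto simp: indicator_def abs_le_iff)
  qed
qed

lemma emeasure_lborel_margin_rectangle:
  assumes "0 \<le> \<sigma>" "0 < R"
  shows "emeasure lborel ({- \<sigma> / 2<..<\<sigma> / 2} \<times> ({- (3 * R / 4)..- (R / 2)} \<union> {R / 2..3 * R / 4}))
           = ennreal (\<sigma> * (R / 2))"
proof -
  have "emeasure lborel ({- (3 * R / 4)..- (R / 2)} \<union> {R / 2..3 * R / 4})
      = emeasure lborel {- (3 * R / 4)..- (R / 2)} + emeasure lborel {R / 2..3 * R / 4 :: real}"
    using assms(2) by (intro plus_emeasure[symmetric]) auto
  also have "\<dots> = ennreal (R / 2)"
    using assms(2) by (simp flip: ennreal_plus)
  finally have "emeasure lborel ({- \<sigma> / 2<..<\<sigma> / 2} \<times> ({- (3 * R / 4)..- (R / 2)} \<union> {R / 2..3 * R / 4}))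
      = ennreal \<sigma> * ennreal (R / 2)"
    using assms(1) by (simp add: emeasure_lborel_Times)
  also have "\<dots> = ennreal (\<sigma> * (R / 2))"
    using assms by (intro ennreal_mult[symmetric]) auto
  finally show ?thesis .
qed

lemma norm_le_of_margin_rectangle:
  assumes "\<sigma> \<le> R / 2" "0 \<le> R"
    and "z \<in> {- \<sigma> / 2<..<\<sigma> / 2} \<times> ({- (3 * R / 4)..- (R / 2)} \<union> {R / 2..3 * R / 4})"
  shows "norm z \<le> R"
proof -
  obtain a b where z: "z = (a, b)" by fastforce
  have "\<bar>a\<bar> \<le> R / 4" "\<bar>b\<bar> \<le> 3 * R / 4"
    using assms by (auto simp: z)
  then have "a\<^sup>2 + b\<^sup>2 \<le> R\<^sup>2"
    using power_mono[of "\<bar>a\<bar>" "R / 4" 2] power_mono[of "\<bar>b\<bar>" "3 * R / 4" 2]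
    by (simp add: power_divide power_mult_distrib) (use zero_le_power2[of R] in linarith)
  then show ?thesis
    using real_sqrt_le_mono[of "a\<^sup>2 + b\<^sup>2" "R\<^sup>2"] assms(2) by (simp add: z norm_Pair)
qed

lemma has_bochner_integral_indicator_comp:
  assumes "finite_measure M" "space M = UNIV" "X \<in> measurable M N" "S \<in> sets N"
  shows "has_bochner_integral M (\<lambda>x. indicator S (X x) :: real) (measure M (X -` S))"
proof -
  have "X -` S \<in> sets M" using measurable_sets[OF assms(3,4)] assms(2) by simp
  moreover have "(\<lambda>x. indicator S (X x) :: real) = indicator (X -` S)"
    by (auto simp: indicator_def)
  ultimately show ?thesis
    using finite_measure.emeasure_finite[OF assms(1)] by (simp add: less_top has_bochner_integral_real_indicator)
qed

lemma inner_clamp_grad_lower_bound: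
  fixes M :: "'a::euclidean_space measure"
  assumes fin: "finite_measure M" and sets: "sets M = sets borel" and int: "integrable M norm"
    and frame: "norm w = 1" "norm e = 1" "w \<bullet> e = 0"
    and dist: "distributed M lborel (\<lambda>x. (w \<bullet> x, e \<bullet> x)) g"
    and g_lower: "\<And>z. norm z \<le> R \<Longrightarrow> ennreal (1 / U) \<le> g z" and g_upper: "\<And>z. g z \<le> ennreal U"
    and q: "q \<in> borel_measurable borel" "\<And>x. p \<le> q x" "\<And>x. q x \<le> 1" "0 \<le> p"
    and params: "s > 0" "\<kappa> \<ge> 0" "\<bar>c\<bar> * \<sigma> / 2 \<le> s * \<kappa>" "\<kappa> < R / 2" "0 < \<sigma>" "\<sigma> \<le> R / 2" "0 < U"
  shows "p * R\<^sup>2 * \<sigma> / (4 * U) - 2 * U * \<sigma> * \<kappa>\<^sup>2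
           \<le> clamp_grad M (\<lambda>x. sgn1 ((c *\<^sub>R w + s *\<^sub>R e) \<bullet> x) * q x) \<sigma> w \<bullet> e"
proof -
  define \<beta> where "\<beta> = (\<lambda>x. sgn1 ((c *\<^sub>R w + s *\<^sub>R e) \<bullet> x) * q x)"
  define X where "X x = (w \<bullet> x, e \<bullet> x)" for x
  define I where "I = {- \<sigma> / 2<..<\<sigma> / 2}"
  define A where "A = I \<times> ({- (3 * R / 4)..- (R / 2)} \<union> {R / 2..3 * R / 4})"
  define B where "B = I \<times> {- \<kappa>..\<kappa>}"
  have "R > 0" using params by linarith
  have space: "space M = UNIV" using sets_eq_imp_space_eq[OF sets] by simp
  have A_sets: "A \<in> sets lborel" and B_sets: "B \<in> sets lborel"
    unfolding A_def B_def I_def by (auto intro!: borel_Times)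
  note X_meas = distributed_measurable[OF dist, folded X_def]
  have "p * R\<^sup>2 * \<sigma> / (4 * U) = p * (R / 2) * (1 / U * (\<sigma> * (R / 2)))"
    by (simp add: power2_eq_square)
  also have "\<dots> \<le> p * (R / 2) * measure M (X -` A)"
    using distributed_measure_ge[OF fin dist[folded X_def] A_sets g_lower, of "\<sigma> * (R / 2)"]
      norm_le_of_margin_rectangle[of \<sigma> R] emeasure_lborel_margin_rectangle[of \<sigma> R] params q(4) \<open>R > 0\<close>
    by (intro mult_left_mono) (simp_all add: A_def I_def space)
  finally have A_bound: "p * R\<^sup>2 * \<sigma> / (4 * U) \<le> p * (R / 2) * measure M (X -` A)" .
  have "emeasure lborel B = ennreal (\<sigma> * (2 * \<kappa>))"
    using params unfolding B_def I_def by (simp add: emeasure_lborel_Times ennreal_mult)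
  then have "\<kappa> * measure M (X -` B) \<le> \<kappa> * (U * (\<sigma> * (2 * \<kappa>)))"
    using distributed_measure_le[OF fin dist[folded X_def] B_sets g_upper] params
    by (intro mult_left_mono) (simp_all add: space)
  also have "\<dots> = 2 * U * \<sigma> * \<kappa>\<^sup>2"
    by (simp add: power2_eq_square)
  finally have B_bound: "\<kappa> * measure M (X -` B) \<le> 2 * U * \<sigma> * \<kappa>\<^sup>2" .
  have \<beta>_meas: "\<beta> \<in> borel_measurable borel"
    using q(1) unfolding \<beta>_def sgn1_def by measurable
  have \<beta>_le: "\<bar>\<beta> x\<bar> \<le> 1" for x
    using q(2)[of x] q(3)[of x] q(4) by (auto simp: \<beta>_def sgn1_def)
  have "indicator (ramp_slab w \<sigma>) x = (indicator I (w \<bullet> x) :: real)" for x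
    by (auto simp: I_def ramp_slab_def indicator_def)
  then have grad: "has_bochner_integral M (\<lambda>x. \<beta> x * indicator I (w \<bullet> x) * (e \<bullet> x)) (clamp_grad M \<beta> \<sigma> w \<bullet> e)"
    using has_bochner_integral_inner_clamp_grad[OF sets int \<beta>_meas \<beta>_le frame(1), where \<sigma> = \<sigma> and h = e] frame(3)
    by simp
  note A_int = has_bochner_integral_indicator_comp[OF fin space X_meas A_sets]
  note B_int = has_bochner_integral_indicator_comp[OF fin space X_meas B_sets]
  have "p * (R / 2) * measure M (X -` A) - \<kappa> * measure M (X -` B)
      = (\<integral>x. p * (R / 2) * indicator A (X x) - \<kappa> * indicator B (X x) \<partial>M)"
    using integrable.intros[OF A_int] integrable.intros[OF B_int]
    by (simp add: has_bochner_integral_integral_eq[OF A_int] has_bochner_integral_integral_eq[OF B_int])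
  also have "\<dots> \<le> (\<integral>x. \<beta> x * indicator I (w \<bullet> x) * (e \<bullet> x) \<partial>M)"
  proof (rule integral_mono)
    show "p * (R / 2) * indicator A (X x) - \<kappa> * indicator B (X x)
        \<le> \<beta> x * indicator I (w \<bullet> x) * (e \<bullet> x)" for x
      using sign_weighted_margin_lower_bound[OF params(1-4) q(4) q(2)[of x] q(3)[of x], of "w \<bullet> x" "e \<bullet> x"]
      by (simp add: A_def B_def I_def X_def \<beta>_def inner_add_left ac_simps)
  qed (use integrable.intros[OF A_int] integrable.intros[OF B_int] integrable.intros[OF grad] in auto)
  also have "\<dots> = clamp_grad M \<beta> \<sigma> w \<bullet> e"
    using grad by (rule has_bochner_integral_integral_eq)
  finally show ?thesis using A_bound B_bound unfolding \<beta>_def by linarith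
qed

lemma sin_lt_sin_between:
  assumes "0 < \<theta>" "\<theta> < pi / 2" "\<theta> < \<phi>" "\<phi> < pi - \<theta>"
  shows "sin \<theta> < sin \<phi>"
proof (cases "\<phi> \<le> pi / 2")
  case True
  then show ?thesis using assms by (intro sin_monotone_2pi) auto
next
  case False
  then have "sin \<theta> < sin (pi - \<phi>)" using assms by (intro sin_monotone_2pi) auto
  then show ?thesis by simp
qed

lemma sin_vec_angle:
  fixes u v :: "'a::real_inner"
  assumes "norm u = 1" "norm v = 1"
  shows "sin (vec_angle u v) = sqrt (1 - (u \<bullet> v)\<^sup>2)"
  using Cauchy_Schwarz_ineq2[of u v] assms by (simp add: vec_angle_def sin_arccos_abs)

lemma unit_vector_orthogonal_decomposition:
  fixes u v :: "'a::real_inner"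
  assumes u: "norm u = 1" and v: "norm v = 1" and "\<bar>u \<bullet> v\<bar> < 1"
  obtains e where "norm e = 1" "u \<bullet> e = 0" "v = (u \<bullet> v) *\<^sub>R u + sqrt (1 - (u \<bullet> v)\<^sup>2) *\<^sub>R e"
proof
  define c where "c = u \<bullet> v"
  define s where "s = sqrt (1 - c\<^sup>2)"
  have "s > 0" using \<open>\<bar>u \<bullet> v\<bar> < 1\<close> by (simp add: s_def c_def abs_square_less_1)
  have uu: "u \<bullet> u = 1" and vv: "v \<bullet> v = 1" using u v by (simp_all add: dot_square_norm)
  have "(v - c *\<^sub>R u) \<bullet> (v - c *\<^sub>R u) = s\<^sup>2"
    using uu vv \<open>\<bar>u \<bullet> v\<bar> < 1\<close> abs_square_less_1[of c]
    by (simp add: s_def c_def inner_diff_left inner_diff_right inner_commute power2_eq_square)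
  then have "norm (v - c *\<^sub>R u) = s" using \<open>s > 0\<close> by (simp add: norm_eq_sqrt_inner)
  then show "norm ((1 / s) *\<^sub>R (v - c *\<^sub>R u)) = 1" using \<open>s > 0\<close> by simp
  show "u \<bullet> (1 / s) *\<^sub>R (v - c *\<^sub>R u) = 0" using uu by (simp add: c_def inner_diff_right)
  show "v = (u \<bullet> v) *\<^sub>R u + sqrt (1 - (u \<bullet> v)\<^sup>2) *\<^sub>R ((1 / s) *\<^sub>R (v - c *\<^sub>R u))"
    using \<open>s > 0\<close> by (simp add: s_def[symmetric] c_def[symmetric])
qed

lemma orthonormal_frame_of_angle:
  fixes u v :: "'a::real_inner"
  assumes u: "norm u = 1" and v: "norm v = 1"
    and "0 < \<theta>" "\<theta> < pi / 2" "\<theta> < vec_angle u v" "vec_angle u v < pi - \<theta>"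
  obtains e where "norm e = 1" "u \<bullet> e = 0" "v = (u \<bullet> v) *\<^sub>R u + sqrt (1 - (u \<bullet> v)\<^sup>2) *\<^sub>R e"
    "sin \<theta> < sqrt (1 - (u \<bullet> v)\<^sup>2)"
proof -
  have sin_lt: "sin \<theta> < sqrt (1 - (u \<bullet> v)\<^sup>2)"
    using sin_lt_sin_between[OF assms(3-6)] sin_vec_angle[OF u v] by simp
  moreover have "0 < sin \<theta>" using assms(3,4) by (intro sin_gt_zero) auto
  ultimately have "0 < sqrt (1 - (u \<bullet> v)\<^sup>2)" by linarith
  then have "\<bar>u \<bullet> v\<bar> < 1" by (simp add: abs_square_less_1)
  with that sin_lt show thesis
    using unit_vector_orthogonal_decomposition[OF u v] by blast
qed

lemma density_bounds_imp_ge_1: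
  fixes g :: "'a::real_normed_vector \<Rightarrow> ennreal"
  assumes "\<And>z. norm z \<le> R \<Longrightarrow> ennreal (1 / U) \<le> g z" "\<And>z. g z \<le> ennreal U" "0 \<le> R" "0 < U"
  shows "1 \<le> U"
proof -
  have "ennreal (1 / U) \<le> g 0" using assms(1)[of 0] assms(3) by simp
  also have "\<dots> \<le> ennreal U" by (rule assms(2))
  finally have "1 / U \<le> U" using assms(4) by simp
  then have "1 \<le> U * U" using assms(4) by (simp add: pos_divide_le_eq)
  show ?thesis
  proof (rule ccontr)
    assume "\<not> 1 \<le> U"
    then have "U * U < 1 * 1" using assms(4) by (intro mult_strict_mono) auto
    with \<open>1 \<le> U * U\<close> show False by simp
  qed
qed

text \<open>\<open>|c| \<sigma> / (2s)\<close> is the half-width \<open>\<kappa>\<close> of the strip, and \<open>t\<close> stands for \<open>sin \<theta>\<close>.\<close>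

lemma ramp_margin_parameters:
  fixes \<sigma> R U p t s c :: real
  assumes "0 < \<sigma>" "\<sigma> \<le> R / (2 * U) * sqrt p * t" "0 < t" "t \<le> 1" "t < s" "\<bar>c\<bar> \<le> 1"
    "1 \<le> U" "0 < R" "0 \<le> p" "p \<le> 1"
  shows "\<sigma> \<le> R / 2" "\<bar>c\<bar> * \<sigma> / (2 * s) < R / 2"
    "\<sigma> * (R\<^sup>2 * p / (8 * U)) \<le> p * R\<^sup>2 * \<sigma> / (4 * U) - 2 * U * \<sigma> * (\<bar>c\<bar> * \<sigma> / (2 * s))\<^sup>2"
proof -
  define \<kappa> where "\<kappa> = \<bar>c\<bar> * \<sigma> / (2 * s)"
  have "sqrt p \<le> 1" using assms(10) by simp
  have "\<kappa> \<le> \<sigma> / (2 * t)"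
    unfolding \<kappa>_def using assms by (intro mult_mono frac_le) (auto simp: divide_le_eq_1)
  also have "\<dots> \<le> R * sqrt p / (4 * U)"
    using assms by (simp add: field_simps)
  finally have \<kappa>_le: "\<kappa> \<le> R * sqrt p / (4 * U)" .
  also have "\<dots> \<le> R / 4"
    using assms order_trans[OF \<open>sqrt p \<le> 1\<close> assms(7)] by (simp add: field_simps)
  finally have "\<kappa> \<le> R / 4" .
  then show "\<bar>c\<bar> * \<sigma> / (2 * s) < R / 2" using assms(8) unfolding \<kappa>_def by linarith
  have "\<sigma> \<le> R / (2 * U) * 1 * 1"
    using assms \<open>sqrt p \<le> 1\<close> by (intro order_trans[OF assms(2)] mult_mono) auto
  also have "\<dots> \<le> R / 2" using assms by (simp add: field_simps)
  finally show "\<sigma> \<le> R / 2" .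
  have "\<kappa>\<^sup>2 \<le> (R * sqrt p / (4 * U))\<^sup>2"
    using \<kappa>_le assms by (intro power_mono) (auto simp: \<kappa>_def)
  also have "\<dots> = R\<^sup>2 * p / (16 * U\<^sup>2)"
    using assms by (simp add: power_mult_distrib power_divide)
  finally have "2 * U * \<sigma> * \<kappa>\<^sup>2 \<le> 2 * U * \<sigma> * (R\<^sup>2 * p / (16 * U\<^sup>2))"
    using assms by (intro mult_left_mono) auto
  also have "\<dots> = p * R\<^sup>2 * \<sigma> / (4 * U) - \<sigma> * (R\<^sup>2 * p / (8 * U))"
    using assms by (simp add: field_simps power2_eq_square)
  finally show "\<sigma> * (R\<^sup>2 * p / (8 * U)) \<le> p * R\<^sup>2 * \<sigma> / (4 * U) - 2 * U * \<sigma> * (\<bar>c\<bar> * \<sigma> / (2 * s))\<^sup>2"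
    unfolding \<kappa>_def by linarith
qed

lemma clamp_grad_margin_lower_bound:
  fixes M :: "'a::euclidean_space measure"
  assumes fin: "finite_measure M" and sets: "sets M = sets borel" and int: "integrable M norm"
    and frame: "norm w = 1" "norm e = 1" "w \<bullet> e = 0"
    and dist: "distributed M lborel (\<lambda>x. (w \<bullet> x, e \<bullet> x)) g"
    and g_bounds: "\<And>z. norm z \<le> R \<Longrightarrow> ennreal (1 / U) \<le> g z" "\<And>z. g z \<le> ennreal U" "0 < R" "0 < U"
    and q: "q \<in> borel_measurable borel" "\<And>x. p \<le> q x" "\<And>x. q x \<le> 1" "0 \<le> p"
    and angle: "\<bar>c\<bar> \<le> 1" "0 < t" "t \<le> 1" "t < s"
    and \<sigma>: "0 < \<sigma>" "\<sigma> \<le> R / (2 * U) * sqrt p * t"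
  shows "\<sigma> * (R\<^sup>2 * p / (8 * U)) \<le> clamp_grad M (\<lambda>x. sgn1 ((c *\<^sub>R w + s *\<^sub>R e) \<bullet> x) * q x) \<sigma> w \<bullet> e"
proof -
  have "1 \<le> U"
    using g_bounds by (intro density_bounds_imp_ge_1[where g = g]) auto
  have "p \<le> 1" using q(2)[of 0] q(3)[of 0] by linarith
  note margin = ramp_margin_parameters[OF \<sigma> angle(2,3,4,1) \<open>1 \<le> U\<close> g_bounds(3) q(4) \<open>p \<le> 1\<close>]
  have "s > 0" using angle by linarith
  then have "p * R\<^sup>2 * \<sigma> / (4 * U) - 2 * U * \<sigma> * (\<bar>c\<bar> * \<sigma> / (2 * s))\<^sup>2
      \<le> clamp_grad M (\<lambda>x. sgn1 ((c *\<^sub>R w + s *\<^sub>R e) \<bullet> x) * q x) \<sigma> w \<bullet> e"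
    using margin(1,2) \<sigma>(1) g_bounds(4)
    by (intro inner_clamp_grad_lower_bound[OF fin sets int frame dist g_bounds(1,2) q]) simp_all
  with margin(3) show ?thesis by linarith
qed

lemma massart_weight:
  fixes f :: "real^'d \<Rightarrow> real"
  assumes "f \<in> borel_measurable borel" "\<And>x. f x = 1 \<or> f x = -1" "massart_noise \<eta> \<eta>f" "\<eta> \<le> 1"
  shows "(\<lambda>x. f x * (1 - 2 * \<eta>f x)) \<in> borel_measurable borel" "\<bar>f x * (1 - 2 * \<eta>f x)\<bar> \<le> 1"
proof -
  have "0 \<le> \<eta>f x" "\<eta>f x \<le> 1" and \<eta>f: "\<eta>f \<in> borel_measurable borel"
    using assms(3,4) unfolding massart_noise_def by (auto intro: order_trans)
  then show "(\<lambda>x. f x * (1 - 2 * \<eta>f x)) \<in> borel_measurable borel" "\<bar>f x * (1 - 2 * \<eta>f x)\<bar> \<le> 1"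
    using assms(1) assms(2)[of x] by auto
qed

lemma ramp_loss_eq_clamp_integral:
  fixes Dx :: "(real^'d) measure"
  assumes "prob_space Dx" "sets Dx = sets borel" "f \<in> borel_measurable borel" "\<And>x. f x = 1 \<or> f x = -1"
    "massart_noise \<eta> \<eta>f" "\<eta> \<le> 1" "\<sigma> > 0"
  shows "ramp_loss Dx f \<eta>f \<sigma> w = 1 / 2 - (\<integral>x. f x * (1 - 2 * \<eta>f x) * clamp \<sigma> (sgn w \<bullet> x) \<partial>Dx) / \<sigma>"
proof -
  interpret prob_space Dx by fact
  have "ramp_loss Dx f \<eta>f \<sigma> w = (\<integral>x. 1 / 2 - f x * (1 - 2 * \<eta>f x) * clamp \<sigma> (sgn w \<bullet> x) / \<sigma> \<partial>Dx)"
    unfolding ramp_loss_def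
  proof (rule Bochner_Integration.integral_cong[OF refl])
    fix x
    have "f x * (w \<bullet> x) / norm w = f x * (sgn w \<bullet> x)" by (simp add: sgn_div_norm divide_inverse)
    then show "(1 - \<eta>f x) * ramp \<sigma> (- f x * (w \<bullet> x) / norm w) + \<eta>f x * ramp \<sigma> (f x * (w \<bullet> x) / norm w)
        = 1 / 2 - f x * (1 - 2 * \<eta>f x) * clamp \<sigma> (sgn w \<bullet> x) / \<sigma>"
      using ramp_noisy_label_expectation[OF assms(7) assms(4)[of x], of "\<eta>f x" "sgn w \<bullet> x"] by simp
  qed
  also have "\<dots> = 1 / 2 - (\<integral>x. f x * (1 - 2 * \<eta>f x) * clamp \<sigma> (sgn w \<bullet> x) \<partial>Dx) / \<sigma>"
    using integrable_clamp_inner[OF finite_measure_axioms assms(2) massart_weight[OF assms(3-6)]]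
    by (simp add: prob_space)
  finally show ?thesis .
qed

lemma has_derivative_ramp_loss:
  fixes Dx :: "(real^'d) measure"
  assumes "prob_space Dx" "sets Dx = sets borel" "integrable Dx norm"
    "f \<in> borel_measurable borel" "\<And>x. f x = 1 \<or> f x = -1" "massart_noise \<eta> \<eta>f" "\<eta> \<le> 1"
    "norm w = 1" "\<sigma> > 0" "AE x in Dx. \<bar>w \<bullet> x\<bar> \<noteq> \<sigma> / 2"
  shows "(ramp_loss Dx f \<eta>f \<sigma> has_derivative
           (\<lambda>h. ((- 1 / \<sigma>) *\<^sub>R clamp_grad Dx (\<lambda>x. f x * (1 - 2 * \<eta>f x)) \<sigma> w) \<bullet> h)) (at w)"
proof -
  have loss: "ramp_loss Dx f \<eta>f \<sigma> = (\<lambda>v. 1 / 2 - (\<integral>x. f x * (1 - 2 * \<eta>f x) * clamp \<sigma> (sgn v \<bullet> x) \<partial>Dx) / \<sigma>)"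
    using ramp_loss_eq_clamp_integral[OF assms(1,2,4-7,9)] by (intro ext)
  have "((\<lambda>v. \<integral>x. f x * (1 - 2 * \<eta>f x) * clamp \<sigma> (sgn v \<bullet> x) \<partial>Dx) has_derivative
      (\<lambda>h. clamp_grad Dx (\<lambda>x. f x * (1 - 2 * \<eta>f x)) \<sigma> w \<bullet> h)) (at w)"
    by (rule has_derivative_clamp_integral[OF prob_space.finite_measure[OF assms(1)] assms(2,3)
          massart_weight[OF assms(4-7)] assms(8-10)])
  then have "((\<lambda>v. 1 / 2 - (\<integral>x. f x * (1 - 2 * \<eta>f x) * clamp \<sigma> (sgn v \<bullet> x) \<partial>Dx) / \<sigma>) has_derivative
      (\<lambda>h. 0 - clamp_grad Dx (\<lambda>x. f x * (1 - 2 * \<eta>f x)) \<sigma> w \<bullet> h / \<sigma>)) (at w)"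
    by (intro has_derivative_diff has_derivative_const bounded_linear.has_derivative[OF bounded_linear_divide])
  then show ?thesis
    unfolding loss by (rule has_derivative_eq_rhs) (simp add: fun_eq_iff)
qed

theorem lemma3p2:
  fixes Dx :: "(real^'d) measure" and \<eta>f :: "real^'d \<Rightarrow> real"
    and w_star w_hat :: "real^'d" and \<eta> U R \<theta> \<sigma> :: real
  assumes eta_lt: "\<eta> < 1/2"
    and noise: "massart_noise \<eta> \<eta>f"
    and bounded: "UR_bounded U R Dx"
    and w_star_unit: "norm w_star = 1"
    and w_hat_unit: "norm w_hat = 1"
    and theta: "0 < \<theta>" "\<theta> < pi / 2"
    and angle: "\<theta> < vec_angle w_hat w_star" "vec_angle w_hat w_star < pi - \<theta>"
    and sigma: "0 < \<sigma>" "\<sigma> \<le> R / (2 * U) * sqrt (1 - 2 * \<eta>) * sin \<theta>"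
  shows "\<exists>G. (ramp_loss Dx (\<lambda>x. sgn1 (w_star \<bullet> x)) \<eta>f \<sigma> has_derivative (\<lambda>h. G \<bullet> h)) (at w_hat)
             \<and> norm G \<ge> R\<^sup>2 * (1 - 2 * \<eta>) / (8 * U)"
proof -
  from bounded have "U > 0" "R > 0" and prob: "prob_space Dx" and sets: "sets Dx = sets borel"
    and iso: "isotropic Dx"
    and density: "\<forall>u1 u2. norm u1 = 1 \<and> norm u2 = 1 \<and> u1 \<bullet> u2 = 0 \<longrightarrow>
      (\<exists>g :: real \<times> real \<Rightarrow> ennreal. distributed Dx lborel (\<lambda>x. (u1 \<bullet> x, u2 \<bullet> x)) g \<and>
        (\<forall>z. norm z \<le> R \<longrightarrow> ennreal (1 / U) \<le> g z) \<and> (\<forall>z. g z \<le> ennreal U))"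
    unfolding UR_bounded_def by auto
  have int: "integrable Dx norm" by (rule integrable_norm_isotropic[OF iso sets prob])
  define c where "c = w_hat \<bullet> w_star"
  obtain e where e: "norm e = 1" "w_hat \<bullet> e = 0" "w_star = c *\<^sub>R w_hat + sqrt (1 - c\<^sup>2) *\<^sub>R e"
    and "sin \<theta> < sqrt (1 - c\<^sup>2)"
    using orthonormal_frame_of_angle[OF w_hat_unit w_star_unit theta angle] unfolding c_def by blast
  have "\<bar>c\<bar> \<le> 1" using Cauchy_Schwarz_ineq2[of w_hat w_star] w_hat_unit w_star_unit by (simp add: c_def)
  obtain g :: "real \<times> real \<Rightarrow> ennreal" where dist: "distributed Dx lborel (\<lambda>x. (w_hat \<bullet> x, e \<bullet> x)) g"
    and g_bounds: "\<And>z. norm z \<le> R \<Longrightarrow> ennreal (1 / U) \<le> g z" "\<And>z. g z \<le> ennreal U"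
    using density[rule_format, of w_hat e] w_hat_unit e(1,2) by blast
  have edge_null: "AE x in Dx. \<bar>w_hat \<bullet> x\<bar> \<noteq> \<sigma> / 2"
    using distributed_AE_fst_neq[OF dist, of "\<sigma> / 2"] distributed_AE_fst_neq[OF dist, of "- \<sigma> / 2"]
    by eventually_elim auto
  have sgn1_meas: "(\<lambda>x. sgn1 (w_star \<bullet> x)) \<in> borel_measurable borel" unfolding sgn1_def by measurable
  have \<eta>f: "0 \<le> \<eta>f x" "\<eta>f x \<le> \<eta>" "(\<lambda>x. 1 - 2 * \<eta>f x) \<in> borel_measurable borel" for x
    using noise unfolding massart_noise_def by auto
  define G where "G = (- 1 / \<sigma>) *\<^sub>R clamp_grad Dx (\<lambda>x. sgn1 (w_star \<bullet> x) * (1 - 2 * \<eta>f x)) \<sigma> w_hat"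
  have "(ramp_loss Dx (\<lambda>x. sgn1 (w_star \<bullet> x)) \<eta>f \<sigma> has_derivative (\<lambda>h. G \<bullet> h)) (at w_hat)"
    unfolding G_def using eta_lt
    by (intro has_derivative_ramp_loss[OF prob sets int sgn1_meas _ noise _ w_hat_unit sigma(1) edge_null])
      (auto simp: sgn1_def)
  moreover have "\<sigma> * (R\<^sup>2 * (1 - 2 * \<eta>) / (8 * U)) \<le> \<sigma> * - (G \<bullet> e)"
    using clamp_grad_margin_lower_bound[OF prob_space.finite_measure[OF prob] sets int w_hat_unit e(1,2) dist
        g_bounds \<open>R > 0\<close> \<open>U > 0\<close> \<eta>f(3), of "1 - 2 * \<eta>" c "sin \<theta>" "sqrt (1 - c\<^sup>2)" \<sigma>]
      \<eta>f(1,2) eta_lt theta sigma \<open>sin \<theta> < sqrt (1 - c\<^sup>2)\<close> \<open>\<bar>c\<bar> \<le> 1\<close> sin_gt_zero[of \<theta>]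
    by (simp add: G_def e(3)[symmetric])
  then have "R\<^sup>2 * (1 - 2 * \<eta>) / (8 * U) \<le> - (G \<bullet> e)"
    using sigma(1) by (simp only: mult_le_cancel_left_pos)
  then have "R\<^sup>2 * (1 - 2 * \<eta>) / (8 * U) \<le> norm G"
    using Cauchy_Schwarz_ineq2[of G e] e(1) by (simp add: abs_le_iff)
  ultimately show ?thesis by blast
qed

end
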